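(* The structures $\mathcal C_3(\overline{\mathbb C}_{\mathbb C})$ and $\mathcal C(\overline{\mathbb C}_{\mathbb C})$ define the same sets.
   Context: $\mathcal C_3(\overline{\mathbb C}_{\mathbb C})$ is the structure with universe $\mathbb C$ whose basic relations are all subsets of $\mathbb C^k$, $k\le 3$, definable with parameters in the field $(\mathbb C;+,\cdot)$ and of dimension $\le1$; $\mathcal C(\overline{\mathbb C}_{\mathbb C})$ is the structure with universe $\mathbb C$ whose basic relations are all such subsets of $\mathbb C^k$ for all $k\in\mathbb N$. Dimension is the algebraic-closure dimension in the complex field. "Define the same sets" means that for every $m$, a subset of $\mathbb C^m$ is definable (allowing quantifiers) in one structure iff it is definable in the other. *)

theory Defs
  imports Complex_Main "HOL-Computational_Algebra.Polynomial"
begin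

datatype fterm = FVar nat | FConst complex | FAdd fterm fterm | FMul fterm fterm

datatype ffml = FEq fterm fterm | FNot ffml | FAnd ffml ffml | FEx nat ffml

primrec teval :: "(nat \<Rightarrow> complex) \<Rightarrow> fterm \<Rightarrow> complex" where
  "teval e (FVar i) = e i"
| "teval e (FConst c) = c"
| "teval e (FAdd s t) = teval e s + teval e t"
| "teval e (FMul s t) = teval e s * teval e t"

primrec fsat :: "(nat \<Rightarrow> complex) \<Rightarrow> ffml \<Rightarrow> bool" where
  "fsat e (FEq s t) = (teval e s = teval e t)"
| "fsat e (FNot p) = (\<not> fsat e p)"
| "fsat e (FAnd p q) = (fsat e p \<and> fsat e q)"
| "fsat e (FEx n p) = (\<exists>a. fsat (e(n := a)) p)"

primrec tparams :: "fterm \<Rightarrow> complex set" where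
  "tparams (FVar i) = {}"
| "tparams (FConst c) = {c}"
| "tparams (FAdd s t) = tparams s \<union> tparams t"
| "tparams (FMul s t) = tparams s \<union> tparams t"

primrec fparams :: "ffml \<Rightarrow> complex set" where
  "fparams (FEq s t) = tparams s \<union> tparams t"
| "fparams (FNot p) = fparams p"
| "fparams (FAnd p q) = fparams p \<union> fparams q"
| "fparams (FEx n p) = fparams p"

definition tuple_env :: "complex list \<Rightarrow> nat \<Rightarrow> complex" where
  "tuple_env xs = (\<lambda>i. if i < length xs then xs ! i else 0)"

definition field_definable_over :: "complex set \<Rightarrow> nat \<Rightarrow> complex list set \<Rightarrow> bool" where
  "field_definable_over A k X \<longleftrightarrow>
     (\<exists>\<phi>. fparams \<phi> \<subseteq> A \<and> X = {xs. length xs = k \<and> fsat (tuple_env xs) \<phi>})"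

inductive_set subfield_gen :: "complex set \<Rightarrow> complex set" for A where
  base: "a \<in> A \<Longrightarrow> a \<in> subfield_gen A"
| zero: "0 \<in> subfield_gen A"
| one: "1 \<in> subfield_gen A"
| add: "a \<in> subfield_gen A \<Longrightarrow> b \<in> subfield_gen A \<Longrightarrow> a + b \<in> subfield_gen A"
| neg: "a \<in> subfield_gen A \<Longrightarrow> - a \<in> subfield_gen A"
| mul: "a \<in> subfield_gen A \<Longrightarrow> b \<in> subfield_gen A \<Longrightarrow> a * b \<in> subfield_gen A"
| inv: "a \<in> subfield_gen A \<Longrightarrow> inverse a \<in> subfield_gen A"

definition acl :: "complex set \<Rightarrow> complex set" where
  "acl A = {b. \<exists>p :: complex poly. p \<noteq> 0 \<and> (\<forall>i. coeff p i \<in> subfield_gen A) \<and> poly p b = 0}"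

definition tuple_dim_le :: "complex set \<Rightarrow> complex list \<Rightarrow> nat \<Rightarrow> bool" where
  "tuple_dim_le A xs n \<longleftrightarrow>
     (\<exists>J. J \<subseteq> set xs \<and> card J \<le> n \<and> set xs \<subseteq> acl (A \<union> J))"

text \<open>Basic relations: field-definable (with parameters) subsets of C^k of dimension \<le> 1.
  The dimension of X defined over a finite A is max of dim(a/A), a \<in> X.\<close>
definition basic_rel :: "nat \<Rightarrow> complex list set \<Rightarrow> bool" where
  "basic_rel k X \<longleftrightarrow>
     (\<exists>A. finite A \<and> field_definable_over A k X \<and> (\<forall>xs\<in>X. tuple_dim_le A xs 1))"

definition C3_rels :: "complex list set set" where
  "C3_rels = {X. \<exists>k\<le>3. basic_rel k X}"

definition C_rels :: "complex list set set" where
  "C_rels = {X. \<exists>k. basic_rel k X}"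

text \<open>Relation symbols are the relations themselves.\<close>
datatype 'r rfml = REq nat nat | RRel 'r "nat list" | RNot "'r rfml"
  | RAnd "'r rfml" "'r rfml" | REx nat "'r rfml"

primrec rsat :: "(nat \<Rightarrow> complex) \<Rightarrow> complex list set rfml \<Rightarrow> bool" where
  "rsat e (REq i j) = (e i = e j)"
| "rsat e (RRel S vs) = (map e vs \<in> S)"
| "rsat e (RNot p) = (\<not> rsat e p)"
| "rsat e (RAnd p q) = (rsat e p \<and> rsat e q)"
| "rsat e (REx n p) = (\<exists>a. rsat (e(n := a)) p)"

primrec rsyms :: "'r rfml \<Rightarrow> 'r set" where
  "rsyms (REq i j) = {}"
| "rsyms (RRel S vs) = {S}"
| "rsyms (RNot p) = rsyms p"
| "rsyms (RAnd p q) = rsyms p \<union> rsyms q"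
| "rsyms (REx n p) = rsyms p"

definition struct_definable :: "complex list set set \<Rightarrow> nat \<Rightarrow> complex list set \<Rightarrow> bool" where
  "struct_definable Rels m X \<longleftrightarrow>
     (\<exists>\<phi>. rsyms \<phi> \<subseteq> Rels \<and> X = {xs. length xs = m \<and> rsat (tuple_env xs) \<phi>})"

end

theory Submission
  imports Defs "HOL-Algebra.Finite_Extensions" "HOL-Analysis.Continuum_Not_Denumerable"
begin

hide_const (open) up_ring.coeff up_ring.monom module.smult
no_notation Polynomials.var (\<open>X\<index>\<close>)

text \<open>Only the basic relations of arity \<open>k > 3\<close> need to be eliminated. Let \<open>S \<subseteq> \<complex>\<^sup>k\<close> have
  dimension at most one and be defined over a finite set \<open>A\<close>, and choose \<open>4k\<close> values \<open>f j\<close>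
  algebraically independent over \<open>A\<close> (possible as \<open>\<complex>\<close> is uncountable). For \<open>t = 0, 1\<close> the code
  \<open>x \<mapsto> (\<Sum>\<^sub>j f (2tk + j) x\<^sub>j, \<Sum>\<^sub>j f (2tk + k + j) x\<^sub>j)\<close> is algebraic over the \<open>f j\<close> and \<open>x\<close>, so the ternary
  relations \<open>{(code\<^sub>t x, x\<^sub>i) | x \<in> S}\<close> and the binary relation of codes shared by two distinct
  elements of \<open>S\<close> are again definable of dimension at most one. A tuple lies in \<open>S\<close> iff for some
  \<open>t\<close> its code is not shared and every coordinate is related to it: by the exchange property, an
  element of \<open>S\<close> whose code is shared for both \<open>t\<close> would put the \<open>4k\<close> independent coefficients
  into the algebraic closure of fewer than \<open>4k\<close> elements over \<open>A\<close>. Rewriting atomic formulas in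
  this way turns every definition in the full structure into one using relations of arity at most three.\<close>

section \<open>The subfield generated by a set\<close>

lemma subfield_gen_mono: "A \<subseteq> B \<Longrightarrow> subfield_gen A \<subseteq> subfield_gen B"
proof
  fix x assume "x \<in> subfield_gen A" "A \<subseteq> B"
  then show "x \<in> subfield_gen B"
    by (induction rule: subfield_gen.induct) (auto intro: subfield_gen.intros)
qed

lemma subfield_gen_diff: "a \<in> subfield_gen A \<Longrightarrow> b \<in> subfield_gen A \<Longrightarrow> a - b \<in> subfield_gen A"
  using subfield_gen.add[of a A "-b"] subfield_gen.neg by auto

lemma subfield_gen_divide: "a \<in> subfield_gen A \<Longrightarrow> b \<in> subfield_gen A \<Longrightarrow> a / b \<in> subfield_gen A"
  by (simp add: divide_inverse subfield_gen.mul subfield_gen.inv)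

lemma subfield_gen_sum: "(\<And>i. i \<in> I \<Longrightarrow> f i \<in> subfield_gen A) \<Longrightarrow> sum f I \<in> subfield_gen A"
  by (induction I rule: infinite_finite_induct) (auto intro: subfield_gen.intros)

lemma subfield_gen_power: "a \<in> subfield_gen A \<Longrightarrow> a ^ n \<in> subfield_gen A"
  by (induction n) (auto intro: subfield_gen.intros)

lemma subfield_gen_least:
  assumes "A \<subseteq> F" "0 \<in> F" "1 \<in> F" "\<And>a b. a \<in> F \<Longrightarrow> b \<in> F \<Longrightarrow> a + b \<in> F"
    "\<And>a. a \<in> F \<Longrightarrow> - a \<in> F" "\<And>a b. a \<in> F \<Longrightarrow> b \<in> F \<Longrightarrow> a * b \<in> F"
    "\<And>a. a \<in> F \<Longrightarrow> inverse a \<in> F"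
  shows "subfield_gen A \<subseteq> F"
proof
  fix x assume "x \<in> subfield_gen A" then show "x \<in> F"
    by (induction rule: subfield_gen.induct) (use assms in auto)
qed

lemma subfield_gen_finite_support:
  "x \<in> subfield_gen A \<Longrightarrow> \<exists>S. finite S \<and> S \<subseteq> A \<and> x \<in> subfield_gen S"
proof (induction rule: subfield_gen.induct)
  case (base a) then show ?case by (intro exI[of _ "{a}"]) (auto intro: subfield_gen.base)
next
  case (add a b)
  then obtain S T where "finite S" "S \<subseteq> A" "a \<in> subfield_gen S" "finite T" "T \<subseteq> A" "b \<in> subfield_gen T"
    by blast
  then show ?case using subfield_gen_mono[of S "S \<union> T"] subfield_gen_mono[of T "S \<union> T"]
    by (intro exI[of _ "S \<union> T"]) (auto intro: subfield_gen.add)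
next
  case (mul a b)
  then obtain S T where "finite S" "S \<subseteq> A" "a \<in> subfield_gen S" "finite T" "T \<subseteq> A" "b \<in> subfield_gen T"
    by blast
  then show ?case using subfield_gen_mono[of S "S \<union> T"] subfield_gen_mono[of T "S \<union> T"]
    by (intro exI[of _ "S \<union> T"]) (auto intro: subfield_gen.mul)
qed (blast intro: subfield_gen.intros)+

primrec subfield_gen_level :: "complex set \<Rightarrow> nat \<Rightarrow> complex set" where
  "subfield_gen_level A 0 = A \<union> {0, 1}"
| "subfield_gen_level A (Suc n) = (let L = subfield_gen_level A n in
     L \<union> (\<lambda>(x, y). x + y) ` (L \<times> L) \<union> uminus ` L \<union> (\<lambda>(x, y). x * y) ` (L \<times> L) \<union> inverse ` L)"

lemma countable_subfield_gen_level: "countable A \<Longrightarrow> countable (subfield_gen_level A n)"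
  by (induction n) (auto simp: Let_def)

lemma subfield_gen_level_mono: "m \<le> n \<Longrightarrow> subfield_gen_level A m \<subseteq> subfield_gen_level A n"
  by (rule lift_Suc_mono_le[of "subfield_gen_level A"]) (auto simp: Let_def)

lemma subfield_gen_subset_levels: "subfield_gen A \<subseteq> (\<Union>n. subfield_gen_level A n)"
proof
  fix x assume "x \<in> subfield_gen A"
  then show "x \<in> (\<Union>n. subfield_gen_level A n)"
  proof (induction rule: subfield_gen.induct)
    case (add a b)
    then obtain m n where "a \<in> subfield_gen_level A m" "b \<in> subfield_gen_level A n" by blast
    then have "a \<in> subfield_gen_level A (max m n)" "b \<in> subfield_gen_level A (max m n)"
      by (meson max.cobounded1 max.cobounded2 subfield_gen_level_mono subsetD)+
    then have "a + b \<in> subfield_gen_level A (Suc (max m n))" by (force simp: Let_def)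
    then show ?case by blast
  next
    case (mul a b)
    then obtain m n where "a \<in> subfield_gen_level A m" "b \<in> subfield_gen_level A n" by blast
    then have "a \<in> subfield_gen_level A (max m n)" "b \<in> subfield_gen_level A (max m n)"
      by (meson max.cobounded1 max.cobounded2 subfield_gen_level_mono subsetD)+
    then have "a * b \<in> subfield_gen_level A (Suc (max m n))" by (force simp: Let_def)
    then show ?case by blast
  next
    case (neg a)
    then obtain n where "a \<in> subfield_gen_level A n" by blast
    then have "- a \<in> subfield_gen_level A (Suc n)" by (simp add: Let_def)
    then show ?case by blast
  next
    case (inv a)
    then obtain n where "a \<in> subfield_gen_level A n" by blast
    then have "inverse a \<in> subfield_gen_level A (Suc n)" by (simp add: Let_def)
    then show ?case by blast
  qed (use subfield_gen_level.simps(1) in blast)+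
qed

lemma countable_subfield_gen: "countable A \<Longrightarrow> countable (subfield_gen A)"
  by (rule countable_subset[OF subfield_gen_subset_levels])
     (auto intro: countable_subfield_gen_level)

section \<open>The complex numbers as a field in the sense of HOL-Algebra\<close>

definition complex_ring :: "complex ring" where
  "complex_ring = \<lparr>carrier = UNIV, monoid.mult = (*), one = 1, ring.zero = 0, add = (+)\<rparr>"

lemma complex_ring_simps [simp]:
  "carrier complex_ring = UNIV" "mult complex_ring = (*)" "one complex_ring = 1"
  "zero complex_ring = 0" "add complex_ring = (+)"
  by (auto simp: complex_ring_def)

lemma field_complex_ring: "field complex_ring"
proof -
  have "\<exists>y. x + y = 0" for x :: complex by (rule exI[of _ "-x"]) simp
  moreover have "x \<noteq> 0 \<Longrightarrow> \<exists>y. x * y = 1" for x :: complex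
    by (rule exI[of _ "inverse x"]) auto
  ultimately show ?thesis
    unfolding complex_ring_def by unfold_locales (auto simp: algebra_simps Units_def)
qed

interpretation CR: domain complex_ring
  using field_complex_ring by (rule field.axioms)

lemma complex_ring_a_inv [simp]: "a_inv complex_ring x = - x"
  using CR.add.inv_equality[of "-x" x] by simp

lemma complex_ring_m_inv [simp]: "x \<noteq> 0 \<Longrightarrow> m_inv complex_ring x = inverse x"
  using CR.comm_inv_char[of x "inverse x"] by simp

lemma complex_ring_pow [simp]: "pow complex_ring x (n::nat) = x ^ n"
  by (induction n) auto

lemma complex_ring_eval: "CR.eval l x = poly (Poly (rev l)) x"
  by (induction l) (simp_all add: Poly_snoc poly_monom)

lemma subfield_subfield_gen: "subfield (subfield_gen A) complex_ring"
  by (rule field.subfieldI'[OF field_complex_ring CR.subringI])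
     (auto intro: subfield_gen.intros)

lemma subfield_gen_subset_subfield:
  assumes F: "subfield F complex_ring" and "A \<subseteq> F"
  shows "subfield_gen A \<subseteq> F"
proof (rule subfield_gen_least[OF \<open>A \<subseteq> F\<close>])
  have sr: "subring F complex_ring" using F by (rule subfieldE(1))
  show "0 \<in> F" "1 \<in> F" using subringE(2,3)[OF sr] by simp_all
  show "a + b \<in> F" "a * b \<in> F" if "a \<in> F" "b \<in> F" for a b
    using subringE(6,7)[OF sr] that by simp_all
  show "- a \<in> F" if "a \<in> F" for a using subringE(5)[OF sr] that by simp
  show "inverse a \<in> F" if "a \<in> F" for a
    using that CR.subfield_m_inv(1)[OF F, of a] subringE(2)[OF sr] by (cases "a = 0") simp_all
qed

section \<open>Algebraic closure\<close>

lemma subfield_gen_subset_acl: "subfield_gen A \<subseteq> acl A"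
proof
  fix a assume "a \<in> subfield_gen A"
  then have "\<forall>i. coeff [:-a, 1:] i \<in> subfield_gen A"
    by (auto simp: coeff_pCons split: nat.split intro: subfield_gen.intros)
  then show "a \<in> acl A" unfolding acl_def by (intro CollectI exI[of _ "[:-a, 1:]"]) auto
qed

lemma acl_superset: "A \<subseteq> acl A"
  using subfield_gen.base subfield_gen_subset_acl by blast

lemma acl_mono: "A \<subseteq> B \<Longrightarrow> acl A \<subseteq> acl B"
  unfolding acl_def using subfield_gen_mono by blast

lemma acl_iff_algebraic_over: "b \<in> acl A \<longleftrightarrow> (CR.algebraic over (subfield_gen A)) b"
proof
  assume "b \<in> acl A"
  then obtain p where p: "p \<noteq> 0" "\<forall>i. coeff p i \<in> subfield_gen A" "poly p b = 0"
    unfolding acl_def by blast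
  have "set (coeffs p) \<subseteq> subfield_gen A" using p(2) by (auto simp: coeffs_def)
  moreover have "hd (rev (coeffs p)) \<noteq> 0" using p(1) by (simp add: hd_rev last_coeffs_eq_coeff_degree)
  ultimately have "rev (coeffs p) \<in> carrier ((subfield_gen A)[X]\<^bsub>complex_ring\<^esub>)"
    unfolding univ_poly_carrier[symmetric] polynomial_def by simp
  moreover have "rev (coeffs p) \<noteq> []" using p(1) by simp
  moreover have "CR.eval (rev (coeffs p)) b = \<zero>\<^bsub>complex_ring\<^esub>" using p(3) by (simp add: complex_ring_eval)
  ultimately show "(CR.algebraic over (subfield_gen A)) b" by (rule CR.algebraicI)
next
  assume "(CR.algebraic over (subfield_gen A)) b"
  then obtain l where l: "l \<in> carrier ((subfield_gen A)[X]\<^bsub>complex_ring\<^esub>)" "l \<noteq> []"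
    "CR.eval l b = \<zero>\<^bsub>complex_ring\<^esub>"
    using CR.algebraicE[OF subfieldE(1)[OF subfield_subfield_gen], of b] by auto
  have hl: "hd l \<noteq> 0" "set l \<subseteq> subfield_gen A"
    using l(1,2) unfolding univ_poly_carrier[symmetric] polynomial_def by auto
  have "coeffs (Poly (rev l)) = rev l" using hl(1) l(2)
    by (cases l) (auto simp: last_rev strip_while_def hd_rev)
  then have "Poly (rev l) \<noteq> 0" using l(2) by (metis Nil_is_rev_conv coeffs_eq_Nil)
  moreover have "\<forall>i. coeff (Poly (rev l)) i \<in> subfield_gen A"
    using hl(2) nth_mem[of _ "rev l"] by (auto simp: nth_default_def subfield_gen.zero)
  moreover have "poly (Poly (rev l)) b = 0" using l(3) by (simp add: complex_ring_eval)
  ultimately show "b \<in> acl A" unfolding acl_def by blast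
qed

text \<open>Transitivity of algebraicity is inherited from the tower law for finite extensions.\<close>

lemma acl_Un_finite_subset:
  assumes B: "finite B" "B \<subseteq> acl C" and b: "b \<in> acl (C \<union> B)"
  shows "b \<in> acl C"
proof -
  obtain bs where bs: "set bs = B" using finite_list[OF B(1)] by blast
  let ?K = "subfield_gen C"
  have K: "subfield ?K complex_ring" by (rule subfield_subfield_gen)
  have alg: "\<And>x. x \<in> set bs \<Longrightarrow> (CR.algebraic over ?K) x" using B(2) bs acl_iff_algebraic_over by blast
  define F where "F = CR.finite_extension ?K bs"
  have F: "subfield F complex_ring" unfolding F_def
    using CR.finite_extension_is_subfield[OF K _ alg] by simp
  have F_dim: "CR.finite_dimension ?K F" unfolding F_def
    using CR.finite_extension_finite_dimension(1)[OF K _ alg] by simp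
  have "?K \<subseteq> F" unfolding F_def by (rule CR.finite_extension_incl) auto
  moreover have "set bs \<subseteq> F" unfolding F_def
    by (rule CR.finite_extension_mem[OF subfieldE(1)[OF K]]) auto
  ultimately have "subfield_gen (C \<union> B) \<subseteq> F"
    using subfield_gen_subset_subfield[OF F] subfield_gen.base[of _ C] bs by blast
  then have "(CR.algebraic over F) b" using b acl_iff_algebraic_over CR.algebraic_mono by blast
  then have "CR.finite_dimension F (CR.simple_extension F b)"
    using CR.finite_dimension_simple_extension[OF F] by simp
  then have "CR.finite_dimension ?K (CR.simple_extension F b)"
    using CR.telescopic_base_dim(1)[OF K F F_dim] by blast
  moreover have "b \<in> CR.simple_extension F b"
    using CR.simple_extension_mem[OF subfieldE(1)[OF F]] by simp
  moreover have "subring (CR.simple_extension F b) complex_ring"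
    using CR.simple_extension_is_subring[OF subfieldE(1)[OF F]] by simp
  ultimately have "(CR.algebraic over ?K) b"
    using CR.finite_dimension_imp_algebraic[OF K] by blast
  then show ?thesis using acl_iff_algebraic_over by blast
qed

lemma acl_acl_subset: "acl (acl C) \<subseteq> acl C"
proof
  fix b assume "b \<in> acl (acl C)"
  then obtain p where p: "p \<noteq> 0" "\<forall>i. coeff p i \<in> subfield_gen (acl C)" "poly p b = 0"
    unfolding acl_def by blast
  have "\<forall>i. \<exists>S. finite S \<and> S \<subseteq> acl C \<and> coeff p i \<in> subfield_gen S"
    using p(2) subfield_gen_finite_support by blast
  then obtain S where S: "\<And>i. finite (S i) \<and> S i \<subseteq> acl C \<and> coeff p i \<in> subfield_gen (S i)"
    by metis
  define T where "T = (\<Union>i\<le>Polynomial.degree p. S i)"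
  have T: "finite T" "T \<subseteq> acl C" unfolding T_def using S by auto
  have "coeff p i \<in> subfield_gen (C \<union> T)" for i
  proof (cases "i \<le> Polynomial.degree p")
    case True
    then have "S i \<subseteq> C \<union> T" unfolding T_def by auto
    then show ?thesis using True S subfield_gen_mono by blast
  qed (simp add: coeff_eq_0 subfield_gen.zero)
  then have "b \<in> acl (C \<union> T)" using p unfolding acl_def by blast
  then show "b \<in> acl C" using acl_Un_finite_subset[OF T] by blast
qed

lemma acl_subset_acl: "B \<subseteq> acl C \<Longrightarrow> acl B \<subseteq> acl C"
  using acl_mono acl_acl_subset by blast

lemma subfield_gen_acl_minimal: "S \<subseteq> acl T \<Longrightarrow> subfield_gen S \<subseteq> acl T"
  using subfield_gen_subset_acl acl_subset_acl by blast

section \<open>The exchange property\<close>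

definition poly_over :: "complex set \<Rightarrow> complex poly \<Rightarrow> bool" where
  "poly_over K p \<longleftrightarrow> (\<forall>i. coeff p i \<in> K)"

lemma poly_over_0: "poly_over (subfield_gen A) 0"
  by (simp add: poly_over_def subfield_gen.zero)

lemma poly_over_1: "poly_over (subfield_gen A) 1"
  by (simp add: poly_over_def coeff_1 subfield_gen.zero subfield_gen.one)

lemma poly_over_const: "c \<in> subfield_gen A \<Longrightarrow> poly_over (subfield_gen A) [:c:]"
  by (simp add: poly_over_def coeff_pCons subfield_gen.zero split: nat.split)

lemma poly_over_X: "poly_over (subfield_gen A) [:0, 1:]"
  by (simp add: poly_over_def coeff_pCons subfield_gen.zero subfield_gen.one split: nat.split)

lemma poly_over_uminus: "poly_over (subfield_gen A) p \<Longrightarrow> poly_over (subfield_gen A) (- p)"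
  by (simp add: poly_over_def subfield_gen.neg)

lemma poly_over_add:
  "poly_over (subfield_gen A) p \<Longrightarrow> poly_over (subfield_gen A) q \<Longrightarrow> poly_over (subfield_gen A) (p + q)"
  by (simp add: poly_over_def subfield_gen.add)

lemma poly_over_mult:
  "poly_over (subfield_gen A) p \<Longrightarrow> poly_over (subfield_gen A) q \<Longrightarrow> poly_over (subfield_gen A) (p * q)"
  unfolding poly_over_def coeff_mult by (auto intro!: subfield_gen_sum subfield_gen.mul)

lemma poly_over_prod:
  "(\<And>i. i \<in> I \<Longrightarrow> poly_over (subfield_gen A) (f i)) \<Longrightarrow> poly_over (subfield_gen A) (prod f I)"
  by (induction I rule: infinite_finite_induct) (auto intro: poly_over_1 poly_over_mult)

lemma subfield_gen_insert_rational:
  assumes "x \<in> subfield_gen (A \<union> {a})"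
  shows "\<exists>f g. poly_over (subfield_gen A) f \<and> poly_over (subfield_gen A) g \<and> poly g a \<noteq> 0 \<and>
           x = poly f a / poly g a"
  using assms
proof (induction rule: subfield_gen.induct)
  case (base c)
  then consider "c \<in> A" | "c = a" by blast
  then show ?case
  proof cases
    case 1 then show ?thesis
      by (intro exI[of _ "[:c:]"] exI[of _ 1]) (auto intro: poly_over_const poly_over_1 subfield_gen.base)
  next
    case 2 then show ?thesis
      by (intro exI[of _ "[:0, 1:]"] exI[of _ 1]) (auto intro: poly_over_X poly_over_1)
  qed
next
  case zero then show ?case by (intro exI[of _ 0] exI[of _ 1]) (auto intro: poly_over_0 poly_over_1)
next
  case one then show ?case by (intro exI[of _ 1] exI[of _ 1]) (auto intro: poly_over_1)
next
  case (add x y)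
  then obtain f1 g1 f2 g2 where "poly_over (subfield_gen A) f1" "poly_over (subfield_gen A) g1"
    "poly g1 a \<noteq> 0" "x = poly f1 a / poly g1 a" "poly_over (subfield_gen A) f2"
    "poly_over (subfield_gen A) g2" "poly g2 a \<noteq> 0" "y = poly f2 a / poly g2 a" by blast
  then show ?case
    by (intro exI[of _ "f1 * g2 + f2 * g1"] exI[of _ "g1 * g2"])
       (auto intro!: poly_over_add poly_over_mult simp: add_frac_eq)
next
  case (neg x)
  then obtain f g where "poly_over (subfield_gen A) f" "poly_over (subfield_gen A) g"
    "poly g a \<noteq> 0" "x = poly f a / poly g a" by blast
  then show ?case by (intro exI[of _ "- f"] exI[of _ g]) (auto intro!: poly_over_uminus)
next
  case (mul x y)
  then obtain f1 g1 f2 g2 where "poly_over (subfield_gen A) f1" "poly_over (subfield_gen A) g1"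
    "poly g1 a \<noteq> 0" "x = poly f1 a / poly g1 a" "poly_over (subfield_gen A) f2"
    "poly_over (subfield_gen A) g2" "poly g2 a \<noteq> 0" "y = poly f2 a / poly g2 a" by blast
  then show ?case
    by (intro exI[of _ "f1 * f2"] exI[of _ "g1 * g2"]) (auto intro!: poly_over_mult)
next
  case (inv x)
  then obtain f g where h: "poly_over (subfield_gen A) f" "poly_over (subfield_gen A) g"
    "poly g a \<noteq> 0" "x = poly f a / poly g a" by blast
  show ?case
  proof (cases "poly f a = 0")
    case True then show ?thesis
      using h by (intro exI[of _ 0] exI[of _ 1]) (auto intro: poly_over_0 poly_over_1)
  next
    case False then show ?thesis using h by (intro exI[of _ g] exI[of _ f]) auto
  qed
qed

lemma common_denominator:
  assumes "\<forall>i. coeff P i \<in> subfield_gen (A \<union> {a})"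
  obtains F D where "\<And>j. j \<le> n \<Longrightarrow> poly_over (subfield_gen A) (F j)" "D \<noteq> 0"
    "\<And>j. j \<le> n \<Longrightarrow> poly (F j) a = coeff P j * D"
proof -
  have "\<forall>j. \<exists>f g. poly_over (subfield_gen A) f \<and> poly_over (subfield_gen A) g \<and>
      poly g a \<noteq> 0 \<and> coeff P j = poly f a / poly g a"
    using assms subfield_gen_insert_rational by blast
  then obtain f g where fg: "\<And>j. poly_over (subfield_gen A) (f j) \<and> poly_over (subfield_gen A) (g j) \<and>
      poly (g j) a \<noteq> 0 \<and> coeff P j = poly (f j) a / poly (g j) a"
    by metis
  define D where "D = (\<Prod>l\<le>n. poly (g l) a)"
  define F where "F j = f j * (\<Prod>l\<in>{..n} - {j}. g l)" for j
  show ?thesis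
  proof
    show "poly_over (subfield_gen A) (F j)" for j
      unfolding F_def using fg by (auto intro!: poly_over_mult poly_over_prod)
    show "D \<noteq> 0" unfolding D_def using fg by auto
    show "poly (F j) a = coeff P j * D" if "j \<le> n" for j
    proof -
      have "D = poly (g j) a * (\<Prod>l\<in>{..n} - {j}. poly (g l) a)"
        unfolding D_def using that by (simp add: prod.remove)
      then show ?thesis unfolding F_def using fg[of j] by (simp add: poly_prod)
    qed
  qed
qed

lemma sum_smult_powers_transcendental_eq_0:
  assumes b: "b \<notin> acl A" and F: "\<And>j. j \<le> n \<Longrightarrow> poly_over (subfield_gen A) (F j)"
    and Q: "(\<Sum>j\<le>n. smult (b ^ j) (F j)) = 0" and j: "j \<le> n"
  shows "F j = 0"
proof (rule poly_eqI)
  fix m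
  define G where "G = (\<Sum>i\<le>n. monom (coeff (F i) m) i)"
  have "poly G b = coeff (\<Sum>i\<le>n. smult (b ^ i) (F i)) m"
    unfolding G_def poly_sum coeff_sum coeff_smult poly_monom by (simp add: mult.commute)
  then have "poly G b = 0" using Q by simp
  moreover have "\<forall>i. coeff G i \<in> subfield_gen A"
    unfolding G_def coeff_sum
    using F subfield_gen.zero[of A] by (auto simp: poly_over_def coeff_monom intro!: subfield_gen_sum)
  ultimately have "G = 0" using b unfolding acl_def by blast
  then show "coeff (F j) m = coeff 0 m"
    using j arg_cong[of G 0 "\<lambda>p. coeff p j"] unfolding G_def coeff_sum by (simp add: coeff_monom)
qed

lemma acl_exchange:
  assumes b: "b \<in> acl (A \<union> {a})" and nb: "b \<notin> acl A"
  shows "a \<in> acl (A \<union> {b})"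
proof -
  obtain P where P: "P \<noteq> 0" "\<forall>i. coeff P i \<in> subfield_gen (A \<union> {a})" "poly P b = 0"
    using b unfolding acl_def by blast
  define n where "n = Polynomial.degree P"
  obtain F D where F: "\<And>j. j \<le> n \<Longrightarrow> poly_over (subfield_gen A) (F j)" and "D \<noteq> 0"
    and FD: "\<And>j. j \<le> n \<Longrightarrow> poly (F j) a = coeff P j * D"
    using common_denominator[OF P(2)] by blast
  define Q where "Q = (\<Sum>j\<le>n. smult (b ^ j) (F j))"
  have "poly Q a = (\<Sum>j\<le>n. b ^ j * (coeff P j * D))"
    unfolding Q_def by (simp add: poly_sum FD)
  also have "\<dots> = D * (\<Sum>j\<le>n. coeff P j * b ^ j)" by (simp add: sum_distrib_left mult_ac)
  also have "\<dots> = 0" using P(3) by (simp add: poly_altdef n_def)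
  finally have "poly Q a = 0" .
  moreover have "Q \<noteq> 0"
  proof
    assume "Q = 0"
    then have "F n = 0" using sum_smult_powers_transcendental_eq_0[of b A n F n] nb F unfolding Q_def by blast
    then show False using FD[of n] \<open>D \<noteq> 0\<close> P(1) unfolding n_def by simp
  qed
  moreover have "\<forall>i. coeff Q i \<in> subfield_gen (A \<union> {b})"
  proof
    fix i
    have "b ^ j * coeff (F j) i \<in> subfield_gen (A \<union> {b})" if "j \<le> n" for j
    proof (rule subfield_gen.mul)
      show "b ^ j \<in> subfield_gen (A \<union> {b})" by (simp add: subfield_gen.base subfield_gen_power)
      have "subfield_gen A \<subseteq> subfield_gen (A \<union> {b})" by (rule subfield_gen_mono) auto
      then show "coeff (F j) i \<in> subfield_gen (A \<union> {b})" using F[OF that] by (auto simp: poly_over_def)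
    qed
    then show "coeff Q i \<in> subfield_gen (A \<union> {b})"
      unfolding Q_def coeff_sum coeff_smult by (auto intro: subfield_gen_sum)
  qed
  ultimately show ?thesis unfolding acl_def by blast
qed

section \<open>Countability and independence\<close>

lemma countable_acl: "countable A \<Longrightarrow> countable (acl A)"
proof -
  assume A: "countable A"
  let ?P = "{p. p \<noteq> 0 \<and> (\<forall>i. coeff p i \<in> subfield_gen A)}"
  have "?P \<subseteq> Poly ` lists (subfield_gen A)"
  proof
    fix p assume "p \<in> ?P"
    then have "coeffs p \<in> lists (subfield_gen A)" by (auto simp: coeffs_def)
    then show "p \<in> Poly ` lists (subfield_gen A)" by (metis Poly_coeffs image_eqI)
  qed
  moreover have "countable (Poly ` lists (subfield_gen A))"
    using countable_subfield_gen[OF A] by (intro countable_image countable_lists)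
  ultimately have "countable ?P" by (rule countable_subset)
  moreover have "countable {x. poly p x = 0}" if "p \<in> ?P" for p
    using that by (intro countable_finite poly_roots_finite) simp
  ultimately have "countable (\<Union>p\<in>?P. {x. poly p x = 0})" by (rule countable_UN)
  moreover have "acl A = (\<Union>p\<in>?P. {x. poly p x = 0})" unfolding acl_def by blast
  ultimately show ?thesis by simp
qed

lemma ex_not_in_acl: "countable A \<Longrightarrow> \<exists>x. x \<notin> acl A"
  using countable_acl[of A] uncountable_UNIV_complex countable_subset[of UNIV "acl A"] by auto

definition acl_independent :: "complex set \<Rightarrow> complex set \<Rightarrow> bool" where
  "acl_independent B I \<longleftrightarrow> (\<forall>x\<in>I. x \<notin> acl (B \<union> (I - {x})))"

lemma acl_independent_insert:
  assumes I: "acl_independent B I" and x: "x \<notin> acl (B \<union> I)"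
  shows "acl_independent B (insert x I)"
  unfolding acl_independent_def
proof
  fix y assume y: "y \<in> insert x I"
  have "x \<notin> I" using x acl_superset by blast
  show "y \<notin> acl (B \<union> (insert x I - {y}))"
  proof (cases "y = x")
    case True
    then show ?thesis using x \<open>x \<notin> I\<close> by (simp add: insert_Diff_if)
  next
    case False
    then have "y \<in> I" using y by simp
    have ny: "y \<notin> acl (B \<union> (I - {y}))" using I \<open>y \<in> I\<close> unfolding acl_independent_def by blast
    show ?thesis
    proof
      assume "y \<in> acl (B \<union> (insert x I - {y}))"
      moreover have "B \<union> (insert x I - {y}) = (B \<union> (I - {y})) \<union> {x}" using False by auto
      ultimately have "y \<in> acl ((B \<union> (I - {y})) \<union> {x})" by simp
      then have "x \<in> acl ((B \<union> (I - {y})) \<union> {y})" using ny by (rule acl_exchange)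
      moreover have "(B \<union> (I - {y})) \<union> {y} = B \<union> I" using \<open>y \<in> I\<close> by auto
      ultimately show False using x by simp
    qed
  qed
qed

lemma ex_acl_independent:
  assumes "countable B"
  shows "\<exists>I. finite I \<and> card I = n \<and> acl_independent B I"
proof (induction n)
  case 0 then show ?case by (intro exI[of _ "{}"]) (simp add: acl_independent_def)
next
  case (Suc n)
  then obtain I where I: "finite I" "card I = n" "acl_independent B I" by blast
  have "countable (B \<union> I)" using assms I(1) by (simp add: countable_finite)
  then obtain x where x: "x \<notin> acl (B \<union> I)" using ex_not_in_acl by blast
  then have "x \<notin> I" using acl_superset by blast
  then show ?case using I x acl_independent_insert by (intro exI[of _ "insert x I"]) simp
qed

lemma acl_independent_subset: "acl_independent B I \<Longrightarrow> J \<subseteq> I \<Longrightarrow> acl_independent B J"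
  unfolding acl_independent_def using acl_mono by (meson Diff_mono Un_mono order_refl subset_iff)

text \<open>Steinitz exchange: the elements of \<open>I - C\<close> are traded one at a time for elements of \<open>C - I\<close>.\<close>

lemma acl_independent_card_le:
  assumes "finite I" "finite C" "acl_independent B I" "I \<subseteq> acl (B \<union> C)"
  shows "card I \<le> card C"
  using assms
proof (induction "card (I - C)" arbitrary: I rule: less_induct)
  case (less I)
  show ?case
  proof (cases "I \<subseteq> C")
    case True then show ?thesis using less.prems card_mono by blast
  next
    case False
    then obtain a where a: "a \<in> I" "a \<notin> C" by blast
    have "\<exists>c\<in>C - I. c \<notin> acl (B \<union> (I - {a}))"
    proof (rule ccontr)
      assume "\<not> ?thesis"
      then have "B \<union> C \<subseteq> acl (B \<union> (I - {a}))"
        using a(2) acl_superset[of "B \<union> (I - {a})"] by blast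
      then have "a \<in> acl (B \<union> (I - {a}))" using acl_subset_acl less.prems(4) a(1) by blast
      then show False using less.prems(3) a(1) unfolding acl_independent_def by blast
    qed
    then obtain c where c: "c \<in> C" "c \<notin> I" "c \<notin> acl (B \<union> (I - {a}))" by blast
    define I' where "I' = insert c (I - {a})"
    have "acl_independent B I'"
      unfolding I'_def using acl_independent_subset[OF less.prems(3)] c(3)
      by (intro acl_independent_insert) auto
    moreover have "I' \<subseteq> acl (B \<union> C)"
      unfolding I'_def using less.prems(4) c(1) acl_superset[of "B \<union> C"] by blast
    moreover have "card (I' - C) < card (I - C)"
      unfolding I'_def using c(1) a less.prems(1) by (auto intro: psubset_card_mono)
    ultimately have "card I' \<le> card C" using less.hyps less.prems(1,2) unfolding I'_def by simp
    moreover have "card I' = card I"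
      unfolding I'_def using a(1) c(2) less.prems(1) card_gt_0_iff[of I] by auto
    ultimately show ?thesis by simp
  qed
qed

lemma tuple_dim_leE:
  assumes "tuple_dim_le A xs n"
  obtains J where "finite J" "card J \<le> n" "set xs \<subseteq> acl (A \<union> J)"
  using assms finite_subset unfolding tuple_dim_le_def by blast

lemma tuple_dim_le_oneI:
  assumes J: "finite J" "card J \<le> 1" and ys: "set ys \<subseteq> acl (B \<union> J)"
  shows "tuple_dim_le B ys 1"
proof (cases "set ys \<subseteq> acl B")
  case True
  then show ?thesis unfolding tuple_dim_le_def by (intro exI[of _ "{}"]) simp
next
  case False
  then obtain u where u: "u \<in> set ys" "u \<notin> acl B" by blast
  have "J \<noteq> {}" using False ys by auto
  then have "card J = 1" using J by (simp add: card_gt_0_iff le_antisym Suc_le_eq)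
  then obtain w where w: "J = {w}" by (rule card_1_singletonE)
  have "u \<in> acl (B \<union> {w})" using u(1) ys w by blast
  then have "w \<in> acl (B \<union> {u})" using u(2) by (rule acl_exchange)
  then have "B \<union> {w} \<subseteq> acl (B \<union> {u})" using acl_superset[of "B \<union> {u}"] by blast
  then have "acl (B \<union> {w}) \<subseteq> acl (B \<union> {u})" by (rule acl_subset_acl)
  then have "set ys \<subseteq> acl (B \<union> {u})" using ys w by blast
  then show ?thesis unfolding tuple_dim_le_def using u(1) by (intro exI[of _ "{u}"]) simp
qed

section \<open>Coding tuples by two generic linear forms\<close>

definition lin_form :: "(nat \<Rightarrow> complex) \<Rightarrow> nat \<Rightarrow> nat \<Rightarrow> complex list \<Rightarrow> complex" where
  "lin_form f ofs k x = (\<Sum>j<k. f (ofs + j) * x ! j)"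

lemma sum_eq_0_coeff_in_subfield_gen:
  fixes k :: nat
  assumes "p < k" and "(\<Sum>j<k. c j * d j) = 0" and "d p \<noteq> 0"
    and "\<And>j. j < k \<Longrightarrow> j \<noteq> p \<Longrightarrow> c j \<in> subfield_gen S"
    and d: "\<And>j. j < k \<Longrightarrow> d j \<in> subfield_gen S"
  shows "c p \<in> subfield_gen S"
proof -
  have "(\<Sum>j<k. c j * d j) = c p * d p + (\<Sum>j\<in>{..<k}-{p}. c j * d j)"
    using assms(1) by (subst sum.remove[of _ p]) auto
  then have "c p = - (\<Sum>j\<in>{..<k}-{p}. c j * d j) / d p"
    using assms(2,3) by (simp add: field_simps add_eq_0_iff)
  moreover have "(\<Sum>j\<in>{..<k}-{p}. c j * d j) \<in> subfield_gen S"
    using assms(4,5) by (intro subfield_gen_sum subfield_gen.mul) auto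
  ultimately show ?thesis using d[OF assms(1)] by (auto intro: subfield_gen_divide subfield_gen.neg)
qed

text \<open>Solve both equations for the two coefficients at a position where the tuples differ; the
  block is then spanned by its other \<open>2k - 2\<close> coefficients.\<close>

lemma eq_lin_forms_block_in_acl:
  assumes lx: "length x = k" and ly: "length y = k" and "x \<noteq> y"
    and e1: "lin_form f ofs k x = lin_form f ofs k y"
    and e2: "lin_form f (ofs + k) k x = lin_form f (ofs + k) k y"
    and Jx: "set x \<subseteq> acl (A \<union> Jx)" and Jy: "set y \<subseteq> acl (A \<union> Jy)"
  shows "\<exists>R \<subseteq> {ofs..<ofs + 2 * k}. card R + 2 = 2 * k \<and>
     f ` {ofs..<ofs + 2 * k} \<subseteq> acl (A \<union> f ` R \<union> Jx \<union> Jy)"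
proof -
  obtain p where p: "p < k" "x ! p \<noteq> y ! p" using lx ly \<open>x \<noteq> y\<close> nth_equalityI by metis
  define R where "R = {ofs..<ofs + 2 * k} - {ofs + p, ofs + k + p}"
  define T where "T = A \<union> f ` R \<union> Jx \<union> Jy"
  define S where "S = f ` R \<union> set x \<union> set y"
  have "set x \<subseteq> acl T" "set y \<subseteq> acl T" and R_acl: "f ` R \<subseteq> acl T"
    using Jx Jy acl_mono[of "A \<union> Jx" T] acl_mono[of "A \<union> Jy" T] acl_superset[of T]
    unfolding T_def by blast+
  then have S: "subfield_gen S \<subseteq> acl T" unfolding S_def by (intro subfield_gen_acl_minimal) blast
  define d where "d j = x ! j - y ! j" for j
  have d: "d j \<in> subfield_gen S" if "j < k" for j
    unfolding d_def S_def using that lx ly by (intro subfield_gen_diff subfield_gen.base) auto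
  have "f (ofs + j) \<in> subfield_gen S" "f (ofs + k + j) \<in> subfield_gen S" if "j < k" "j \<noteq> p" for j
    using that p(1) unfolding S_def R_def by (auto intro!: subfield_gen.base)
  moreover have "(\<Sum>j<k. f (ofs + j) * d j) = 0" "(\<Sum>j<k. f (ofs + k + j) * d j) = 0"
    using e1 e2 unfolding lin_form_def d_def by (simp_all add: right_diff_distrib sum_subtractf add.assoc)
  ultimately have "f (ofs + p) \<in> subfield_gen S" "f (ofs + k + p) \<in> subfield_gen S"
    using p d by (auto intro: sum_eq_0_coeff_in_subfield_gen[of p k _ d] simp: d_def)
  moreover have "{ofs..<ofs + 2 * k} = insert (ofs + p) (insert (ofs + k + p) R)"
    unfolding R_def using p(1) by auto
  ultimately have "f ` {ofs..<ofs + 2 * k} \<subseteq> acl T" using S R_acl by auto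
  moreover have "card R = 2 * k - 2" unfolding R_def using p(1) by (simp add: card_Diff_subset)
  ultimately show ?thesis unfolding T_def using p(1)
    by (intro exI[of _ R]) (auto simp: R_def)
qed

text \<open>With \<open>4k\<close> independent coefficients, a tuple of dimension at most one cannot collide with
  other such tuples under both codes: otherwise all \<open>4k\<close> coefficients would lie in the closure
  of \<open>4k - 4\<close> of them and three points of dimension at most one, contradicting Steinitz.\<close>

lemma not_collides_twice:
  fixes f :: "nat \<Rightarrow> complex" and k :: nat
  assumes inj: "inj_on f {..<4*k}" and ind: "acl_independent A (f ` {..<4*k})"
    and lx: "length x = k" and ly: "length y = k" and lz: "length z = k"
    and "x \<noteq> y" and "x \<noteq> z"
    and dx: "tuple_dim_le A x 1" and dy: "tuple_dim_le A y 1" and dz: "tuple_dim_le A z 1"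
    and e1: "lin_form f 0 k x = lin_form f 0 k y" and e2: "lin_form f k k x = lin_form f k k y"
    and e3: "lin_form f (2*k) k x = lin_form f (2*k) k z"
    and e4: "lin_form f (2*k + k) k x = lin_form f (2*k + k) k z"
  shows False
proof -
  obtain Jx where Jx: "finite Jx" "card Jx \<le> 1" "set x \<subseteq> acl (A \<union> Jx)" using dx by (rule tuple_dim_leE)
  obtain Jy where Jy: "finite Jy" "card Jy \<le> 1" "set y \<subseteq> acl (A \<union> Jy)" using dy by (rule tuple_dim_leE)
  obtain Jz where Jz: "finite Jz" "card Jz \<le> 1" "set z \<subseteq> acl (A \<union> Jz)" using dz by (rule tuple_dim_leE)
  have "lin_form f (0 + k) k x = lin_form f (0 + k) k y" using e2 by simp
  then obtain R1 where R1: "R1 \<subseteq> {0..<0 + 2 * k}" "card R1 + 2 = 2 * k"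
      "f ` {0..<0 + 2 * k} \<subseteq> acl (A \<union> f ` R1 \<union> Jx \<union> Jy)"
    using eq_lin_forms_block_in_acl[OF lx ly \<open>x \<noteq> y\<close> e1 _ Jx(3) Jy(3)] by blast
  obtain R2 where R2: "R2 \<subseteq> {2*k..<2*k + 2 * k}" "card R2 + 2 = 2 * k"
      "f ` {2*k..<2*k + 2 * k} \<subseteq> acl (A \<union> f ` R2 \<union> Jx \<union> Jz)"
    using eq_lin_forms_block_in_acl[OF lx lz \<open>x \<noteq> z\<close> e3 e4 Jx(3) Jz(3)] by blast
  define C where "C = f ` R1 \<union> f ` R2 \<union> Jx \<union> Jy \<union> Jz"
  have "finite C" unfolding C_def using R1(1) R2(1) Jx(1) Jy(1) Jz(1) by (auto intro: finite_subset)
  have "card C \<le> card (f ` R1) + card (f ` R2) + card Jx + card Jy + card Jz"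
    unfolding C_def by (meson add_le_mono card_Un_le le_trans order_refl)
  moreover have "card (f ` R1) \<le> card R1" "card (f ` R2) \<le> card R2"
    using R1(1) R2(1) by (auto intro: card_image_le finite_subset)
  ultimately have "card C < 4 * k" using R1(2) R2(2) Jx(2) Jy(2) Jz(2) by linarith
  moreover have "f ` {..<4*k} \<subseteq> acl (A \<union> C)"
  proof -
    have "{..<4*k} = {0..<0 + 2 * k} \<union> {2*k..<2*k + 2 * k}" by auto
    moreover have "acl (A \<union> f ` R1 \<union> Jx \<union> Jy) \<subseteq> acl (A \<union> C)"
      "acl (A \<union> f ` R2 \<union> Jx \<union> Jz) \<subseteq> acl (A \<union> C)"
      unfolding C_def by (rule acl_mono, blast)+
    ultimately show ?thesis using R1(3) R2(3) by (simp only: image_Un) blast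
  qed
  then have "card (f ` {..<4*k}) \<le> card C" using acl_independent_card_le[OF _ \<open>finite C\<close> ind] by simp
  moreover have "card (f ` {..<4*k}) = 4 * k" using inj by (simp add: card_image)
  ultimately show False by simp
qed

section \<open>Definability in the field\<close>

primrec rename_fterm :: "(nat \<Rightarrow> nat) \<Rightarrow> fterm \<Rightarrow> fterm" where
  "rename_fterm r (FVar i) = FVar (r i)"
| "rename_fterm r (FConst c) = FConst c"
| "rename_fterm r (FAdd s t) = FAdd (rename_fterm r s) (rename_fterm r t)"
| "rename_fterm r (FMul s t) = FMul (rename_fterm r s) (rename_fterm r t)"

primrec rename_ffml :: "(nat \<Rightarrow> nat) \<Rightarrow> ffml \<Rightarrow> ffml" where
  "rename_ffml r (FEq s t) = FEq (rename_fterm r s) (rename_fterm r t)"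
| "rename_ffml r (FNot p) = FNot (rename_ffml r p)"
| "rename_ffml r (FAnd p q) = FAnd (rename_ffml r p) (rename_ffml r q)"
| "rename_ffml r (FEx n p) = FEx (r n) (rename_ffml r p)"

lemma teval_rename_fterm: "teval e (rename_fterm r t) = teval (e \<circ> r) t"
  by (induction t) auto

lemma fparams_rename_ffml: "fparams (rename_ffml r p) = fparams p"
proof -
  have "tparams (rename_fterm r t) = tparams t" for t by (induction t) auto
  then show ?thesis by (induction p) auto
qed

lemma fsat_rename_ffml: "inj r \<Longrightarrow> fsat e (rename_ffml r p) = fsat (e \<circ> r) p"
proof (induction p arbitrary: e)
  case (FEx n p)
  have "\<And>a. (e(r n := a)) \<circ> r = (e \<circ> r)(n := a)"
    using FEx.prems by (auto simp: fun_eq_iff inj_eq)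
  then show ?case using FEx by (simp add: comp_def)
qed (auto simp: teval_rename_fterm)

definition fdefinable :: "complex set \<Rightarrow> ((nat \<Rightarrow> complex) \<Rightarrow> bool) \<Rightarrow> bool" where
  "fdefinable B P \<longleftrightarrow> (\<exists>\<phi>. fparams \<phi> \<subseteq> B \<and> (\<forall>e. fsat e \<phi> = P e))"

lemma fdefinable_fsat: "fparams \<phi> \<subseteq> B \<Longrightarrow> fdefinable B (\<lambda>e. fsat e \<phi>)"
  unfolding fdefinable_def by blast

lemma fdefinable_conj: "fdefinable B P \<Longrightarrow> fdefinable B Q \<Longrightarrow> fdefinable B (\<lambda>e. P e \<and> Q e)"
  unfolding fdefinable_def by (metis Un_least fparams.simps(3) fsat.simps(3))

lemma fdefinable_neg: "fdefinable B P \<Longrightarrow> fdefinable B (\<lambda>e. \<not> P e)"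
  unfolding fdefinable_def by (metis fparams.simps(2) fsat.simps(2))

lemma fdefinable_ex: "fdefinable B P \<Longrightarrow> fdefinable B (\<lambda>e. \<exists>a. P (e(v := a)))"
  unfolding fdefinable_def by (metis fparams.simps(4) fsat.simps(4))

lemma fdefinable_rename: "fdefinable B P \<Longrightarrow> inj r \<Longrightarrow> fdefinable B (\<lambda>e. P (e \<circ> r))"
  unfolding fdefinable_def by (metis fparams_rename_ffml fsat_rename_ffml)

lemma fdefinable_All_less:
  fixes n :: nat
  assumes "\<And>i. i < n \<Longrightarrow> fdefinable B (P i)"
  shows "fdefinable B (\<lambda>e. \<forall>i<n. P i e)"
  using assms
proof (induction n)
  case 0
  show ?case unfolding fdefinable_def by (intro exI[of _ "FEq (FVar 0) (FVar 0)"]) simp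
next
  case (Suc n)
  then have "fdefinable B (\<lambda>e. (\<forall>i<n. P i e) \<and> P n e)" by (intro fdefinable_conj) auto
  moreover have "(\<lambda>e. \<forall>i<Suc n. P i e) = (\<lambda>e. (\<forall>i<n. P i e) \<and> P n e)"
    by (auto simp: less_Suc_eq)
  ultimately show ?case by simp
qed

lemma fdefinable_var_eq: "fdefinable B (\<lambda>e. e v = e w)"
  unfolding fdefinable_def by (rule exI[of _ "FEq (FVar v) (FVar w)"]) simp

lemma fdefinable_var_eq_lin:
  fixes n :: nat
  assumes "0 \<in> B" "c ` {..<n} \<subseteq> B"
  shows "fdefinable B (\<lambda>e. e v = (\<Sum>j<n. c j * e (w j)))"
proof -
  define lsum where "lsum m = fold (\<lambda>j t. FAdd t (FMul (FConst (c j)) (FVar (w j)))) [0..<m] (FConst 0)" for m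
  have "teval e (lsum m) = (\<Sum>j<m. c j * e (w j))" "tparams (lsum m) \<subseteq> insert 0 (c ` {..<m})" for e m
    by (induction m) (auto simp: lsum_def)
  moreover from this(2)[of n] have "tparams (lsum n) \<subseteq> B" using assms by blast
  ultimately show ?thesis unfolding fdefinable_def
    by (intro exI[of _ "FEq (FVar v) (lsum n)"]) simp
qed

lemma fdefinable_ex_override:
  assumes "fdefinable B P" and "finite V"
  shows "fdefinable B (\<lambda>e. \<exists>g. P (override_on e g V))"
  using assms(2)
proof (induction V rule: finite_induct)
  case empty
  then show ?case using assms(1) by simp
next
  case (insert v V)
  have "(\<lambda>e. \<exists>g. P (override_on e g (insert v V))) = (\<lambda>e. \<exists>a g. P (override_on (e(v := a)) g V))"
  proof (intro ext iffI)
    fix e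
    assume "\<exists>g. P (override_on e g (insert v V))"
    then show "\<exists>a g. P (override_on (e(v := a)) g V)" by (metis override_on_insert')
  next
    fix e
    assume "\<exists>a g. P (override_on (e(v := a)) g V)"
    then obtain a g where "P (override_on (e(v := a)) g V)" by blast
    moreover have "override_on (e(v := a)) g V = override_on e (g(v := a)) (insert v V)"
      using insert.hyps(2) by (auto simp: override_on_def fun_eq_iff)
    ultimately show "\<exists>g. P (override_on e g (insert v V))" by metis
  qed
  then show ?case using fdefinable_ex[OF insert.IH, of v] by (simp only:)
qed

lemma field_definable_overI:
  "fdefinable B P \<Longrightarrow> field_definable_over B n {l. length l = n \<and> P (tuple_env l)}"
  unfolding fdefinable_def field_definable_over_def by auto

text \<open>Two \<open>k\<close>-tuples are stored interleaved in the variables \<open>3, \<dots>, 2k + 2\<close>, so that each copy,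
  read through the renaming \<open>j \<mapsto> 2j + 3\<close> resp. \<open>j \<mapsto> 2j + 4\<close>, is followed by zeros exactly as
  in \<open>tuple_env\<close>; variables \<open>0, 1, 2\<close> are left untouched.\<close>

definition pair_env :: "nat \<Rightarrow> complex list \<Rightarrow> complex list \<Rightarrow> (nat \<Rightarrow> complex) \<Rightarrow> nat \<Rightarrow> complex" where
  "pair_env k x y e =
     override_on e (\<lambda>v. if odd v then x ! ((v - 3) div 2) else y ! ((v - 4) div 2)) {3..<2 * k + 3}"

lemma pair_env_less_3 [simp]: "v < 3 \<Longrightarrow> pair_env k x y e v = e v"
  by (simp add: pair_env_def)

lemma pair_env_fst [simp]: "j < k \<Longrightarrow> pair_env k x y e (2 * j + 3) = x ! j"
  and pair_env_snd [simp]: "j < k \<Longrightarrow> pair_env k x y e (2 * j + 4) = y ! j"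
  by (simp_all add: pair_env_def)

lemma pair_env_comp_fst:
  "length x = k \<Longrightarrow> (\<And>v. v \<ge> 3 \<Longrightarrow> e v = 0) \<Longrightarrow> pair_env k x y e \<circ> (\<lambda>j. 2 * j + 3) = tuple_env x"
  and pair_env_comp_snd:
  "length y = k \<Longrightarrow> (\<And>v. v \<ge> 3 \<Longrightarrow> e v = 0) \<Longrightarrow> pair_env k x y e \<circ> (\<lambda>j. 2 * j + 4) = tuple_env y"
  by (auto simp: fun_eq_iff pair_env_def tuple_env_def)

lemma ex_override_iff_ex_pair_env:
  "(\<exists>g. P (override_on e g {3..<2 * k + 3})) \<longleftrightarrow>
     (\<exists>x y. length x = k \<and> length y = k \<and> P (pair_env k x y e))"
proof
  assume "\<exists>g. P (override_on e g {3..<2 * k + 3})"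
  then obtain g where g: "P (override_on e g {3..<2 * k + 3})" ..
  define x where "x = map (\<lambda>j. g (2 * j + 3)) [0..<k]"
  define y where "y = map (\<lambda>j. g (2 * j + 4)) [0..<k]"
  have "override_on e g {3..<2 * k + 3} = pair_env k x y e"
  proof
    fix v
    show "override_on e g {3..<2 * k + 3} v = pair_env k x y e v"
    proof (cases "v \<in> {3..<2 * k + 3}")
      case True
      then show ?thesis
        by (cases "odd v") (auto simp: pair_env_def x_def y_def elim!: oddE evenE)
    qed (simp add: pair_env_def)
  qed
  then show "\<exists>x y. length x = k \<and> length y = k \<and> P (pair_env k x y e)"
    using g by (intro exI[of _ x] exI[of _ y]) (simp add: x_def y_def)
qed (auto simp: pair_env_def)

lemma sum_pair_env_fst: "(\<Sum>j<k. c j * pair_env k x y e (2 * j + 3)) = (\<Sum>j<k. c j * x ! j)"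
  and sum_pair_env_snd: "(\<Sum>j<k. c j * pair_env k x y e (2 * j + 4)) = (\<Sum>j<k. c j * y ! j)"
  by (auto intro: sum.cong)

lemma tuple_env_above: "length l \<le> 3 \<Longrightarrow> v \<ge> 3 \<Longrightarrow> tuple_env l v = 0"
  by (simp add: tuple_env_def)

section \<open>Coding a relation of dimension one by ternary and binary ones\<close>

text \<open>\<open>f\<close> enumerates the coefficients of the two codes \<open>t = 0, 1\<close>, each using \<open>2k\<close> of them.\<close>

locale basic_rel_coding =
  fixes k :: nat and A :: "complex set" and \<phi> :: ffml and S :: "complex list set"
    and f :: "nat \<Rightarrow> complex"
  assumes k: "k \<ge> 1" and finite_A: "finite A" and params: "fparams \<phi> \<subseteq> A"
    and S_eq: "S = {xs. length xs = k \<and> fsat (tuple_env xs) \<phi>}"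
    and dim_S: "\<And>xs. xs \<in> S \<Longrightarrow> tuple_dim_le A xs 1"
    and inj_f: "inj_on f {..<4*k}" and indep_f: "acl_independent A (f ` {..<4*k})"
begin

definition B :: "complex set" where
  "B = A \<union> f ` {..<4*k} \<union> {0}"

definition code1 :: "nat \<Rightarrow> complex list \<Rightarrow> complex" where
  "code1 t x = lin_form f (2*t*k) k x"

definition code2 :: "nat \<Rightarrow> complex list \<Rightarrow> complex" where
  "code2 t x = lin_form f (2*t*k + k) k x"

definition coord_rel :: "nat \<Rightarrow> nat \<Rightarrow> complex list set" where
  "coord_rel t i = {[code1 t x, code2 t x, x ! i] | x. x \<in> S}"

definition collision_rel :: "nat \<Rightarrow> complex list set" where
  "collision_rel t = {[code1 t x, code2 t x] | x y.
     x \<in> S \<and> y \<in> S \<and> x \<noteq> y \<and> code1 t x = code1 t y \<and> code2 t x = code2 t y}"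

lemma length_S: "x \<in> S \<Longrightarrow> length x = k"
  using S_eq by simp

lemma codes_in_acl:
  assumes x: "x \<in> S" and J: "set x \<subseteq> acl (A \<union> J)" and t: "t \<le> 1"
  shows "code1 t x \<in> acl (B \<union> J)" "code2 t x \<in> acl (B \<union> J)"
proof -
  let ?F = "f ` {..<4*k} \<union> set x"
  have "f ` {..<4*k} \<subseteq> acl (B \<union> J)" using acl_superset[of "B \<union> J"] unfolding B_def by blast
  moreover have "set x \<subseteq> acl (B \<union> J)" using J acl_mono[of "A \<union> J" "B \<union> J"] unfolding B_def by blast
  ultimately have S: "subfield_gen ?F \<subseteq> acl (B \<union> J)" by (intro subfield_gen_acl_minimal) blast
  have "lin_form f ofs k x \<in> subfield_gen ?F" if "ofs + k \<le> 4 * k" for ofs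
    unfolding lin_form_def using that length_S[OF x]
    by (intro subfield_gen_sum subfield_gen.mul subfield_gen.base) auto
  moreover have "2*t*k + k \<le> 4 * k" "2*t*k + k + k \<le> 4 * k" using t by (auto simp: le_Suc_eq)
  ultimately show "code1 t x \<in> acl (B \<union> J)" "code2 t x \<in> acl (B \<union> J)"
    unfolding code1_def code2_def using S by (meson le_trans add_le_mono1 le_add1 subsetD)+
qed

lemma dim_coord_rel: "t \<le> 1 \<Longrightarrow> i < k \<Longrightarrow> l \<in> coord_rel t i \<Longrightarrow> tuple_dim_le B l 1"
proof -
  assume t: "t \<le> 1" and i: "i < k" and "l \<in> coord_rel t i"
  then obtain x where x: "x \<in> S" "l = [code1 t x, code2 t x, x ! i]" unfolding coord_rel_def by blast
  obtain J where J: "finite J" "card J \<le> 1" "set x \<subseteq> acl (A \<union> J)"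
    using dim_S[OF x(1)] by (rule tuple_dim_leE)
  have "x ! i \<in> acl (B \<union> J)"
    using i length_S[OF x(1)] J(3) acl_mono[of "A \<union> J" "B \<union> J"] unfolding B_def by force
  then have "set l \<subseteq> acl (B \<union> J)" using x(2) codes_in_acl[OF x(1) J(3) t] by simp
  then show ?thesis using J(1,2) by (rule tuple_dim_le_oneI[rotated 2])
qed

lemma dim_collision_rel: "t \<le> 1 \<Longrightarrow> l \<in> collision_rel t \<Longrightarrow> tuple_dim_le B l 1"
proof -
  assume t: "t \<le> 1" and "l \<in> collision_rel t"
  then obtain x where x: "x \<in> S" "l = [code1 t x, code2 t x]" unfolding collision_rel_def by blast
  obtain J where J: "finite J" "card J \<le> 1" "set x \<subseteq> acl (A \<union> J)"
    using dim_S[OF x(1)] by (rule tuple_dim_leE)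
  have "set l \<subseteq> acl (B \<union> J)" using x(2) codes_in_acl[OF x(1) J(3) t] by simp
  then show ?thesis using J(1,2) by (rule tuple_dim_le_oneI[rotated 2])
qed

text \<open>In the bodies below, variables \<open>0, 1, 2\<close> hold the arguments of the relation and the
  coded tuples live in the variables of \<open>pair_env\<close>.\<close>

definition coord_body :: "nat \<Rightarrow> nat \<Rightarrow> (nat \<Rightarrow> complex) \<Rightarrow> bool" where
  "coord_body t i E \<longleftrightarrow> fsat (E \<circ> (\<lambda>j. 2*j + 3)) \<phi> \<and>
     E 0 = (\<Sum>j<k. f (2*t*k + j) * E (2*j + 3)) \<and> E 1 = (\<Sum>j<k. f (2*t*k + k + j) * E (2*j + 3)) \<and>
     E 2 = E (2*i + 3)"

definition collision_body :: "nat \<Rightarrow> (nat \<Rightarrow> complex) \<Rightarrow> bool" where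
  "collision_body t E \<longleftrightarrow> fsat (E \<circ> (\<lambda>j. 2*j + 3)) \<phi> \<and> fsat (E \<circ> (\<lambda>j. 2*j + 4)) \<phi> \<and>
     \<not> (\<forall>j<k. E (2*j + 3) = E (2*j + 4)) \<and>
     E 0 = (\<Sum>j<k. f (2*t*k + j) * E (2*j + 3)) \<and> E 0 = (\<Sum>j<k. f (2*t*k + j) * E (2*j + 4)) \<and>
     E 1 = (\<Sum>j<k. f (2*t*k + k + j) * E (2*j + 3)) \<and> E 1 = (\<Sum>j<k. f (2*t*k + k + j) * E (2*j + 4))"

lemma fdefinable_coord_body: "t \<le> 1 \<Longrightarrow> fdefinable B (coord_body t i)"
  unfolding coord_body_def
  by (intro fdefinable_conj fdefinable_rename fdefinable_fsat fdefinable_var_eq fdefinable_var_eq_lin)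
     (use params in \<open>auto simp: B_def inj_def le_Suc_eq\<close>)

lemma fdefinable_collision_body: "t \<le> 1 \<Longrightarrow> fdefinable B (collision_body t)"
  unfolding collision_body_def
  by (intro fdefinable_conj fdefinable_neg fdefinable_All_less fdefinable_rename fdefinable_fsat
        fdefinable_var_eq fdefinable_var_eq_lin)
     (use params in \<open>auto simp: B_def inj_def le_Suc_eq\<close>)

lemma coord_body_pair_env:
  assumes "i < k" "length x = k"
  shows "coord_body t i (pair_env k x y (tuple_env [a, b, c])) \<longleftrightarrow>
    x \<in> S \<and> [a, b, c] = [code1 t x, code2 t x, x ! i]"
  using assms pair_env_comp_fst[OF assms(2), of "tuple_env [a, b, c]" y]
  by (auto simp: coord_body_def S_eq code1_def code2_def lin_form_def sum_pair_env_fst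
      tuple_env_above add.assoc) (auto simp: tuple_env_def)

lemma collision_body_pair_env:
  assumes "length x = k" "length y = k"
  shows "collision_body t (pair_env k x y (tuple_env [a, b])) \<longleftrightarrow>
    x \<in> S \<and> y \<in> S \<and> x \<noteq> y \<and> [a, b] = [code1 t x, code2 t x] \<and>
    code1 t x = code1 t y \<and> code2 t x = code2 t y"
  using assms pair_env_comp_fst[OF assms(1), of "tuple_env [a, b]" y]
    pair_env_comp_snd[OF assms(2), of "tuple_env [a, b]" x]
  by (auto simp: collision_body_def S_eq code1_def code2_def lin_form_def sum_pair_env_fst
      sum_pair_env_snd tuple_env_above add.assoc list_eq_iff_nth_eq) (auto simp: tuple_env_def)

end

context basic_rel_coding
begin

lemma coord_rel_eq:
  assumes "i < k"
  shows "coord_rel t i = {l. length l = 3 \<and> (\<exists>g. coord_body t i (override_on (tuple_env l) g {3..<2*k + 3}))}"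
proof -
  have "l \<in> coord_rel t i \<longleftrightarrow>
      length l = 3 \<and> (\<exists>x y. length x = k \<and> length y = k \<and> coord_body t i (pair_env k x y (tuple_env l)))" for l
  proof (cases "length l = 3")
    case True
    then obtain a b c where l: "l = [a, b, c]" by (auto simp: numeral_3_eq_3 length_Suc_conv)
    show ?thesis
    proof
      assume "l \<in> coord_rel t i"
      then obtain x where x: "x \<in> S" "l = [code1 t x, code2 t x, x ! i]" unfolding coord_rel_def by blast
      have "length x = k" using x(1) by (rule length_S)
      moreover have "coord_body t i (pair_env k x x (tuple_env l))"
        using coord_body_pair_env[OF assms \<open>length x = k\<close>] x l by simp
      ultimately show "length l = 3 \<and> (\<exists>x y. length x = k \<and> length y = k \<and>
          coord_body t i (pair_env k x y (tuple_env l)))"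
        using l by auto
    next
      assume "length l = 3 \<and> (\<exists>x y. length x = k \<and> length y = k \<and>
          coord_body t i (pair_env k x y (tuple_env l)))"
      then obtain x y where "length x = k" "coord_body t i (pair_env k x y (tuple_env l))" by blast
      then have "x \<in> S" "l = [code1 t x, code2 t x, x ! i]"
        using coord_body_pair_env[OF assms \<open>length x = k\<close>] l by simp_all
      then show "l \<in> coord_rel t i" unfolding coord_rel_def by blast
    qed
  qed (auto simp: coord_rel_def)
  then show ?thesis by (auto simp: ex_override_iff_ex_pair_env)
qed

lemma collision_rel_eq:
  "collision_rel t = {l. length l = 2 \<and> (\<exists>g. collision_body t (override_on (tuple_env l) g {3..<2*k + 3}))}"
proof -
  have "l \<in> collision_rel t \<longleftrightarrow>
      length l = 2 \<and> (\<exists>x y. length x = k \<and> length y = k \<and> collision_body t (pair_env k x y (tuple_env l)))" for l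
  proof (cases "length l = 2")
    case True
    then obtain a b where l: "l = [a, b]" by (auto simp: numeral_2_eq_2 length_Suc_conv)
    show ?thesis
    proof
      assume "l \<in> collision_rel t"
      then obtain x y where "x \<in> S" "y \<in> S" "x \<noteq> y" "code1 t x = code1 t y" "code2 t x = code2 t y"
        "l = [code1 t x, code2 t x]" unfolding collision_rel_def by blast
      moreover from this have "length x = k" "length y = k" by (simp_all add: length_S)
      ultimately have "collision_body t (pair_env k x y (tuple_env l))"
        using collision_body_pair_env[of x y t a b] l by simp
      then show "length l = 2 \<and> (\<exists>x y. length x = k \<and> length y = k \<and>
          collision_body t (pair_env k x y (tuple_env l)))"
        using l \<open>length x = k\<close> \<open>length y = k\<close> by auto
    next
      assume "length l = 2 \<and> (\<exists>x y. length x = k \<and> length y = k \<and>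
          collision_body t (pair_env k x y (tuple_env l)))"
      then obtain x y where xy: "length x = k" "length y = k" "collision_body t (pair_env k x y (tuple_env l))"
        by blast
      then have "x \<in> S" "y \<in> S" "x \<noteq> y" "l = [code1 t x, code2 t x]"
        "code1 t x = code1 t y" "code2 t x = code2 t y"
        using collision_body_pair_env[OF xy(1,2)] l by simp_all
      then show "l \<in> collision_rel t" unfolding collision_rel_def by blast
    qed
  qed (auto simp: collision_rel_def)
  then show ?thesis by (auto simp: ex_override_iff_ex_pair_env)
qed

lemma basic_rel_coord_rel: "t \<le> 1 \<Longrightarrow> i < k \<Longrightarrow> basic_rel 3 (coord_rel t i)"
  unfolding basic_rel_def coord_rel_eq
  using finite_A dim_coord_rel coord_rel_eq
    field_definable_overI[OF fdefinable_ex_override[OF fdefinable_coord_body]]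
  by (intro exI[of _ B]) (auto simp: B_def)

lemma basic_rel_collision_rel: "t \<le> 1 \<Longrightarrow> basic_rel 2 (collision_rel t)"
  unfolding basic_rel_def
  using finite_A dim_collision_rel collision_rel_eq
    field_definable_overI[OF fdefinable_ex_override[OF fdefinable_collision_body]]
  by (intro exI[of _ B]) (auto simp: B_def)

definition collides :: "nat \<Rightarrow> complex list \<Rightarrow> bool" where
  "collides t x \<longleftrightarrow> (\<exists>y\<in>S. y \<noteq> x \<and> code1 t y = code1 t x \<and> code2 t y = code2 t x)"

lemma not_collides_0_or_1:
  assumes x: "x \<in> S"
  shows "\<not> collides 0 x \<or> \<not> collides 1 x"
proof (rule ccontr)
  assume "\<not> ?thesis"
  then obtain y z where y: "y \<in> S" "y \<noteq> x" "code1 0 y = code1 0 x" "code2 0 y = code2 0 x"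
    and z: "z \<in> S" "z \<noteq> x" "code1 1 z = code1 1 x" "code2 1 z = code2 1 x"
    unfolding collides_def by blast
  show False
    by (rule not_collides_twice[OF inj_f indep_f length_S[OF x] length_S[OF y(1)] length_S[OF z(1)]
          y(2)[symmetric] z(2)[symmetric] dim_S[OF x] dim_S[OF y(1)] dim_S[OF z(1)]])
       (use y z in \<open>simp_all add: code1_def code2_def\<close>)
qed

lemma collides_if_code_in_collision_rel:
  assumes "[code1 t x, code2 t x] \<in> collision_rel t"
  shows "collides t x"
proof -
  obtain y z where yz: "y \<in> S" "z \<in> S" "y \<noteq> z" "code1 t y = code1 t z" "code2 t y = code2 t z"
    "[code1 t x, code2 t x] = [code1 t y, code2 t y]" using assms unfolding collision_rel_def by blast
  show ?thesis
  proof (cases "y = x")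
    case True
    then show ?thesis using yz unfolding collides_def by (intro bexI[of _ z]) auto
  next
    case False
    then show ?thesis using yz unfolding collides_def by (intro bexI[of _ y]) auto
  qed
qed

text \<open>Witnesses for the coordinates of \<open>ys\<close> share the code \<open>(a, b)\<close>, which is no collision, so they
  are all equal to a single element of \<open>S\<close>, which then is \<open>ys\<close>.\<close>

lemma mem_S_if_coded:
  assumes ys: "length ys = k" and R: "\<forall>i<k. [a, b, ys ! i] \<in> coord_rel t i"
    and C: "[a, b] \<notin> collision_rel t"
  shows "ys \<in> S"
proof -
  have "\<forall>i\<in>{..<k}. \<exists>x\<in>S. [a, b, ys ! i] = [code1 t x, code2 t x, x ! i]"
    using R unfolding coord_rel_def by blast
  then obtain xs where xs: "\<And>i. i \<in> {..<k} \<Longrightarrow>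
      xs i \<in> S \<and> a = code1 t (xs i) \<and> b = code2 t (xs i) \<and> ys ! i = xs i ! i"
    by (metis list.inject)
  have k0: "0 \<in> {..<k}" using k by simp
  have same: "xs i = xs 0" if i: "i \<in> {..<k}" for i
  proof (rule ccontr)
    assume "xs i \<noteq> xs 0"
    then have "[a, b] \<in> collision_rel t" unfolding collision_rel_def using xs[OF i] xs[OF k0]
      by (intro CollectI exI[of _ "xs i"] exI[of _ "xs 0"]) auto
    then show False using C by contradiction
  qed
  have "ys = xs 0"
  proof (rule nth_equalityI)
    show "length ys = length (xs 0)" using ys length_S xs[OF k0] by simp
    show "ys ! i = xs 0 ! i" if "i < length ys" for i
      using that ys xs[of i] same[of i] by simp
  qed
  then show "ys \<in> S" using xs[OF k0] by simp
qed

lemma mem_S_iff_coded: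
  assumes "length ys = k"
  shows "ys \<in> S \<longleftrightarrow>
    (\<exists>t\<le>1. \<exists>a b. (\<forall>i<k. [a, b, ys ! i] \<in> coord_rel t i) \<and> [a, b] \<notin> collision_rel t)"
proof
  assume "ys \<in> S"
  then have "\<not> collides 0 ys \<or> \<not> collides 1 ys" by (rule not_collides_0_or_1)
  then obtain t where t: "t \<le> 1" "\<not> collides t ys" by (metis le_refl zero_le_one)
  then have "[code1 t ys, code2 t ys] \<notin> collision_rel t"
    using collides_if_code_in_collision_rel by blast
  moreover have "\<forall>i<k. [code1 t ys, code2 t ys, ys ! i] \<in> coord_rel t i"
    using \<open>ys \<in> S\<close> unfolding coord_rel_def by blast
  ultimately show "\<exists>t\<le>1. \<exists>a b. (\<forall>i<k. [a, b, ys ! i] \<in> coord_rel t i) \<and> [a, b] \<notin> collision_rel t"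
    using t(1) by (intro exI[of _ t] conjI exI[of _ "code1 t ys"] exI[of _ "code2 t ys"])
qed (use assms mem_S_if_coded in blast)

end

section \<open>Reduction to relations of arity at most three\<close>

primrec rconj :: "'r rfml list \<Rightarrow> 'r rfml" where
  "rconj [] = REq 0 0"
| "rconj (p # ps) = RAnd p (rconj ps)"

lemma rsat_rconj: "rsat e (rconj ps) \<longleftrightarrow> (\<forall>p\<in>set ps. rsat e p)"
  by (induction ps) auto

lemma rsyms_rconj: "rsyms (rconj ps) = (\<Union>p\<in>set ps. rsyms p)"
  by (induction ps) auto

definition coded_formula ::
  "(nat \<Rightarrow> complex list set) \<Rightarrow> complex list set \<Rightarrow> nat list \<Rightarrow> nat \<Rightarrow> complex list set rfml" where
  "coded_formula R Col vs m = REx m (REx (Suc m)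
     (RAnd (rconj (map (\<lambda>i. RRel (R i) [m, Suc m, vs ! i]) [0..<length vs]))
       (RNot (RRel Col [m, Suc m]))))"

lemma rsat_coded_formula:
  assumes "\<And>v. v \<in> set vs \<Longrightarrow> v < m"
  shows "rsat e (coded_formula R Col vs m) \<longleftrightarrow>
    (\<exists>a b. (\<forall>i<length vs. [a, b, map e vs ! i] \<in> R i) \<and> [a, b] \<notin> Col)"
proof -
  have "(e(m := a, Suc m := b)) (vs ! i) = e (vs ! i)" if "i < length vs" for a b i
    using assms[OF nth_mem[OF that]] by simp
  then show ?thesis unfolding coded_formula_def by (simp add: rsat_rconj atLeast0LessThan del: upt_Suc) (simp add: Ball_def)
qed

lemma rsyms_coded_formula: "rsyms (coded_formula R Col vs m) = R ` {..<length vs} \<union> {Col}"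
  unfolding coded_formula_def by (auto simp: rsyms_rconj)

lemma basic_rel_in_C3_rels: "basic_rel n S \<Longrightarrow> n \<le> 3 \<Longrightarrow> S \<in> C3_rels"
  unfolding C3_rels_def by blast

context basic_rel_coding
begin

lemma C3_formula_for_S:
  assumes "length vs = k"
  shows "\<exists>\<theta>. rsyms \<theta> \<subseteq> C3_rels \<and> (\<forall>e. rsat e \<theta> \<longleftrightarrow> map e vs \<in> S)"
proof -
  define m where "m = Suc (Max (insert 0 (set vs)))"
  have fresh: "\<And>v. v \<in> set vs \<Longrightarrow> v < m" unfolding m_def by (simp add: le_imp_less_Suc)
  define \<theta> where "\<theta> = RNot (RAnd (RNot (coded_formula (coord_rel 0) (collision_rel 0) vs m))
                                 (RNot (coded_formula (coord_rel 1) (collision_rel 1) vs m)))"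
  have "rsat e \<theta> \<longleftrightarrow> map e vs \<in> S" for e
  proof -
    let ?P = "\<lambda>t. \<exists>a b. (\<forall>i<k. [a, b, map e vs ! i] \<in> coord_rel t i) \<and> [a, b] \<notin> collision_rel t"
    have "rsat e \<theta> \<longleftrightarrow> ?P 0 \<or> ?P 1"
      unfolding \<theta>_def using assms by (simp add: rsat_coded_formula[OF fresh])
    also have "\<dots> \<longleftrightarrow> (\<exists>t\<le>1. ?P t)" by (auto simp: le_Suc_eq)
    also have "\<dots> \<longleftrightarrow> map e vs \<in> S" using assms by (simp add: mem_S_iff_coded)
    finally show ?thesis .
  qed
  moreover have "rsyms \<theta> \<subseteq> C3_rels"
  proof -
    have "coord_rel t i \<in> C3_rels" if "t \<le> 1" "i < k" for t i
      by (rule basic_rel_in_C3_rels[OF basic_rel_coord_rel[OF that]]) simp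
    moreover have "collision_rel t \<in> C3_rels" if "t \<le> 1" for t
      by (rule basic_rel_in_C3_rels[OF basic_rel_collision_rel[OF that]]) simp
    ultimately show ?thesis unfolding \<theta>_def using assms by (auto simp: rsyms_coded_formula)
  qed
  ultimately show ?thesis by blast
qed

end

lemma basic_rel_C3_expressible:
  assumes S: "basic_rel k S"
  shows "\<exists>\<theta>. rsyms \<theta> \<subseteq> C3_rels \<and> (\<forall>e. rsat e \<theta> \<longleftrightarrow> map e vs \<in> S)"
proof (cases "k \<le> 3")
  case True
  then show ?thesis using basic_rel_in_C3_rels[OF S] by (intro exI[of _ "RRel S vs"]) auto
next
  case False
  obtain A \<phi> where A: "finite A" "fparams \<phi> \<subseteq> A" "S = {xs. length xs = k \<and> fsat (tuple_env xs) \<phi>}"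
    "\<And>xs. xs \<in> S \<Longrightarrow> tuple_dim_le A xs 1"
    using S unfolding basic_rel_def field_definable_over_def by blast
  obtain I where I: "finite I" "card I = 4 * k" "acl_independent A I"
    using ex_acl_independent[of A "4 * k"] A(1) countable_finite by blast
  obtain f where "bij_betw f {..<4 * k} I"
    using ex_bij_betw_nat_finite[OF I(1)] I(2) by (auto simp: lessThan_atLeast0)
  then interpret basic_rel_coding k A \<phi> S f
    using False A I(3) by unfold_locales (auto simp: bij_betw_def)
  show ?thesis
  proof (cases "length vs = k")
    case False
    then show ?thesis using A(3) by (intro exI[of _ "RNot (REq 0 0)"]) auto
  qed (rule C3_formula_for_S)
qed

lemma C3_formula_equivalent:
  "rsyms \<phi> \<subseteq> C_rels \<Longrightarrow> \<exists>\<psi>. rsyms \<psi> \<subseteq> C3_rels \<and> (\<forall>e. rsat e \<psi> \<longleftrightarrow> rsat e \<phi>)"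
proof (induction \<phi>)
  case (REq i j)
  then show ?case by (intro exI[of _ "REq i j"]) simp
next
  case (RRel S vs)
  then show ?case using basic_rel_C3_expressible unfolding C_rels_def by auto
next
  case (RNot p)
  then obtain \<psi> where "rsyms \<psi> \<subseteq> C3_rels" "\<forall>e. rsat e \<psi> \<longleftrightarrow> rsat e p" by auto
  then show ?case by (intro exI[of _ "RNot \<psi>"]) simp
next
  case (RAnd p q)
  then obtain \<psi> \<chi> where "rsyms \<psi> \<subseteq> C3_rels" "\<forall>e. rsat e \<psi> \<longleftrightarrow> rsat e p"
    "rsyms \<chi> \<subseteq> C3_rels" "\<forall>e. rsat e \<chi> \<longleftrightarrow> rsat e q" by auto
  then show ?case by (intro exI[of _ "RAnd \<psi> \<chi>"]) simp
next
  case (REx n p)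
  then obtain \<psi> where "rsyms \<psi> \<subseteq> C3_rels" "\<forall>e. rsat e \<psi> \<longleftrightarrow> rsat e p" by auto
  then show ?case by (intro exI[of _ "REx n \<psi>"]) simp
qed

theorem proposition6p1:
  shows "\<forall>m X. struct_definable C3_rels m X \<longleftrightarrow> struct_definable C_rels m X"
proof (intro allI iffI)
  fix m X
  assume "struct_definable C3_rels m X"
  moreover have "C3_rels \<subseteq> C_rels" unfolding C3_rels_def C_rels_def by blast
  ultimately show "struct_definable C_rels m X" unfolding struct_definable_def by blast
next
  fix m X
  assume "struct_definable C_rels m X"
  then obtain \<phi> where "rsyms \<phi> \<subseteq> C_rels" and X: "X = {xs. length xs = m \<and> rsat (tuple_env xs) \<phi>}"
    unfolding struct_definable_def by blast
  then obtain \<psi> where "rsyms \<psi> \<subseteq> C3_rels" "\<forall>e. rsat e \<psi> \<longleftrightarrow> rsat e \<phi>"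
    using C3_formula_equivalent by blast
  then show "struct_definable C3_rels m X"
    unfolding struct_definable_def X by (intro exI[of _ \<psi>]) simp
qed

end
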